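(* Let $\{z_n\}_{n\ge 0}$ be a sequence of positive real numbers satisfying $$(\alpha_1n+\alpha_0)z_{n+1}=(\beta_1n+\beta_0)z_n-(\gamma_1n+\gamma_0)z_{n-1}\quad (n\ge 1),$$ where $\alpha_1n+\alpha_0$, $\beta_1n+\beta_0$, $\gamma_1n+\gamma_0$ are positive for all $n\ge 1$. Put $A=\beta_0\gamma_1-\beta_1\gamma_0$, $B=\gamma_0\alpha_1-\gamma_1\alpha_0$, $C=\alpha_0\beta_1-\alpha_1\beta_0$. Suppose $z_0z_2\ge z_1^2$. Then $\{z_n\}_{n\ge 0}$ is log-convex if one of the following holds: (i) $B\ge 0$ and $C\ge 0$; (ii) $B<0$, $C>0$, $AC\ge B^2$ and $z_0B+z_1C\ge 0$; (iii) $B>0$, $C<0$, $AC\le B^2$ and $z_0B+z_1C\ge 0$.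
   Context: A sequence $a_0,a_1,\ldots$ of nonnegative real numbers is log-convex if $a_{k-1}a_{k+1}\ge a_k^2$ for all $k\ge 1$. *)

theory Defs
  imports Complex_Main
begin

definition log_convex :: "(nat \<Rightarrow> real) \<Rightarrow> bool" where
  "log_convex a \<longleftrightarrow> (\<forall>k. a k \<ge> 0) \<and> (\<forall>k\<ge>1. a (k - 1) * a (k + 1) \<ge> (a k)\<^sup>2)"

end

theory Submission
  imports Defs
begin

text \<open>Write \<open>a\<^sub>n, b\<^sub>n, c\<^sub>n\<close> for the coefficients and \<open>D\<^sub>n = z\<^sub>n\<^sub>-\<^sub>1 z\<^sub>n\<^sub>+\<^sub>1 - z\<^sub>n\<^sup>2\<close>.
  Eliminating \<open>z\<^sub>n\<^sub>+\<^sub>2\<close> and \<open>z\<^sub>n\<^sub>-\<^sub>1\<close> with the recurrence gives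
  \<open>a\<^sub>n a\<^sub>n\<^sub>+\<^sub>1 D\<^sub>n\<^sub>+\<^sub>1 = a\<^sub>n\<^sub>+\<^sub>1 c\<^sub>n D\<^sub>n + z\<^sub>n (C z\<^sub>n\<^sub>+\<^sub>1 + B z\<^sub>n)\<close>, because for linear
  coefficients the discrete Wronskians \<open>a\<^sub>n b\<^sub>n\<^sub>+\<^sub>1 - a\<^sub>n\<^sub>+\<^sub>1 b\<^sub>n\<close> and \<open>a\<^sub>n\<^sub>+\<^sub>1 c\<^sub>n - a\<^sub>n c\<^sub>n\<^sub>+\<^sub>1\<close>
  are the constants \<open>C\<close> and \<open>B\<close>. Hence \<open>D\<^sub>n \<ge> 0\<close> propagates as long as
  \<open>C z\<^sub>n + B z\<^sub>n\<^sub>-\<^sub>1 \<ge> 0\<close> does, and each of the conditions (i)--(iii) makes this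
  second quantity propagate as well, either from \<open>D\<^sub>n \<ge> 0\<close> (when \<open>C > 0\<close>) or from the
  relation \<open>A a\<^sub>n + B b\<^sub>n + C c\<^sub>n = 0\<close> (when \<open>C < 0\<close>).\<close>

lemma linear_wronskian:
  fixes p\<^sub>1 p\<^sub>0 q\<^sub>1 q\<^sub>0 :: real
  shows "(p\<^sub>1 * real n + p\<^sub>0) * (q\<^sub>1 * real (n + 1) + q\<^sub>0)
      - (p\<^sub>1 * real (n + 1) + p\<^sub>0) * (q\<^sub>1 * real n + q\<^sub>0)
    = p\<^sub>0 * q\<^sub>1 - p\<^sub>1 * q\<^sub>0"
  by (simp add: algebra_simps)

lemma linear_cramer:
  fixes x \<alpha>\<^sub>1 \<alpha>\<^sub>0 \<beta>\<^sub>1 \<beta>\<^sub>0 \<gamma>\<^sub>1 \<gamma>\<^sub>0 :: real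
  shows "(\<beta>\<^sub>0 * \<gamma>\<^sub>1 - \<beta>\<^sub>1 * \<gamma>\<^sub>0) * (\<alpha>\<^sub>1 * x + \<alpha>\<^sub>0) + (\<gamma>\<^sub>0 * \<alpha>\<^sub>1 - \<gamma>\<^sub>1 * \<alpha>\<^sub>0) * (\<beta>\<^sub>1 * x + \<beta>\<^sub>0)
    + (\<alpha>\<^sub>0 * \<beta>\<^sub>1 - \<alpha>\<^sub>1 * \<beta>\<^sub>0) * (\<gamma>\<^sub>1 * x + \<gamma>\<^sub>0) = 0"
  by (simp add: algebra_simps)

lemma wronskian_combination_step_of_log_convex:
  fixes B C u v w :: real
  assumes "C > 0" "u > 0" "v \<ge> 0" "v\<^sup>2 \<le> u * w" "C * v + B * u \<ge> 0"
  shows "C * w + B * v \<ge> 0"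
proof -
  have "0 \<le> v * (C * v + B * u)"
    using assms by simp
  also have "\<dots> = C * v\<^sup>2 + B * u * v"
    by (simp add: algebra_simps power2_eq_square)
  also have "\<dots> \<le> C * (u * w) + B * u * v"
    using assms by simp
  also have "\<dots> = u * (C * w + B * v)"
    by (simp add: algebra_simps)
  finally show ?thesis
    using \<open>u > 0\<close> by (simp add: zero_le_mult_iff)
qed

lemma wronskian_combination_step_of_recurrence:
  fixes A B C p q r u v w :: real
  assumes recurrence: "p * w = q * v - r * u"
    and cramer: "A * p + B * q + C * r = 0"
    and "p > 0" "r > 0" "v \<ge> 0" "B > 0" "C < 0" "A * C \<le> B\<^sup>2" "C * v + B * u \<ge> 0"
  shows "C * w + B * v \<ge> 0"
proof -
  have cramer_q: "B * q = - A * p - C * r"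
    using cramer by simp
  have "B * p * (C * w + B * v) = B * C * (p * w) + B\<^sup>2 * p * v"
    by (simp add: algebra_simps power2_eq_square)
  also have "\<dots> = C * v * (B * q) - B * C * r * u + B\<^sup>2 * p * v"
    unfolding recurrence by (simp add: algebra_simps)
  also have "\<dots> = p * v * (B\<^sup>2 - A * C) + (- C) * r * (C * v + B * u)"
    unfolding cramer_q by (simp add: algebra_simps power2_eq_square)
  finally have "B * p * (C * w + B * v) = p * v * (B\<^sup>2 - A * C) + (- C) * r * (C * v + B * u)" .
  moreover have "p * v * (B\<^sup>2 - A * C) \<ge> 0" "(- C) * r * (C * v + B * u) \<ge> 0"
    using assms by (intro mult_nonneg_nonneg; simp)+
  ultimately have "B * p * (C * w + B * v) \<ge> 0"
    by linarith
  then show ?thesis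
    using mult_pos_pos[OF \<open>B > 0\<close> \<open>p > 0\<close>] by (simp add: zero_le_mult_iff)
qed

locale three_term_recurrence =
  fixes a b c z :: "nat \<Rightarrow> real"
  assumes recurrence: "\<And>n. n \<ge> 1 \<Longrightarrow> a n * z (n + 1) = b n * z n - c n * z (n - 1)"
begin

definition gap :: "nat \<Rightarrow> real" where
  "gap n = z (n - 1) * z (n + 1) - (z n)\<^sup>2"

lemma gap_identity:
  assumes "n \<ge> 1"
  shows "a n * a (n + 1) * gap (n + 1) = a (n + 1) * c n * gap n
    + z n * ((a n * b (n + 1) - a (n + 1) * b n) * z (n + 1)
      + (a (n + 1) * c n - a n * c (n + 1)) * z n)"
proof -
  have next_step: "a (n + 1) * z (n + 2) = b (n + 1) * z (n + 1) - c (n + 1) * z n"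
    using recurrence[of "n + 1"] by (simp add: numeral_2_eq_2)
  have this_step: "c n * z (n - 1) = b n * z n - a n * z (n + 1)"
    using recurrence[OF assms] by simp
  have "a n * a (n + 1) * gap (n + 1)
      = a n * z n * (a (n + 1) * z (n + 2)) - a n * a (n + 1) * (z (n + 1))\<^sup>2"
    by (simp add: gap_def algebra_simps numeral_2_eq_2)
  moreover have "a (n + 1) * c n * gap n
      = a (n + 1) * z (n + 1) * (c n * z (n - 1)) - a (n + 1) * c n * (z n)\<^sup>2"
    by (simp add: gap_def algebra_simps)
  ultimately show ?thesis
    unfolding next_step this_step by (simp add: algebra_simps power2_eq_square)
qed

lemma gap_step:
  assumes "n \<ge> 1" "a n > 0" "a (n + 1) > 0" "c n > 0" "z n \<ge> 0" "gap n \<ge> 0"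
    and "(a n * b (n + 1) - a (n + 1) * b n) * z (n + 1)
      + (a (n + 1) * c n - a n * c (n + 1)) * z n \<ge> 0"
  shows "gap (n + 1) \<ge> 0"
proof -
  have "a n * a (n + 1) * gap (n + 1) \<ge> 0"
    unfolding gap_identity[OF \<open>n \<ge> 1\<close>] using assms by simp
  then show ?thesis
    using mult_pos_pos[OF \<open>a n > 0\<close> \<open>a (n + 1) > 0\<close>] by (simp add: zero_le_mult_iff)
qed

lemma wronskian_combination_step:
  fixes A B C :: real
  assumes "n \<ge> 1" "z (n - 1) > 0" "z n > 0" "z (n + 1) > 0" "a n > 0" "c n > 0"
    and cramer: "A * a n + B * b n + C * c n = 0"
    and signs: "(B \<ge> 0 \<and> C \<ge> 0) \<or> C > 0 \<or> (B > 0 \<and> C < 0 \<and> A * C \<le> B\<^sup>2)"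
    and "gap n \<ge> 0" "C * z n + B * z (n - 1) \<ge> 0"
  shows "C * z (n + 1) + B * z n \<ge> 0"
  using signs
proof (elim disjE)
  assume "B \<ge> 0 \<and> C \<ge> 0"
  then show ?thesis
    using assms by simp
next
  assume "C > 0"
  moreover have "(z n)\<^sup>2 \<le> z (n - 1) * z (n + 1)"
    using \<open>gap n \<ge> 0\<close> by (simp add: gap_def)
  ultimately show ?thesis
    using assms by (simp add: wronskian_combination_step_of_log_convex)
next
  assume "B > 0 \<and> C < 0 \<and> A * C \<le> B\<^sup>2"
  then show ?thesis
    using assms wronskian_combination_step_of_recurrence[OF recurrence[OF \<open>n \<ge> 1\<close>] cramer]
    by simp
qed

lemma gap_nonneg_of_constant_wronskians:
  fixes A B C :: real
  assumes z_pos: "\<And>n. z n > 0"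
    and a_pos: "\<And>n. n \<ge> 1 \<Longrightarrow> a n > 0"
    and c_pos: "\<And>n. n \<ge> 1 \<Longrightarrow> c n > 0"
    and wronskian_ab: "\<And>n. n \<ge> 1 \<Longrightarrow> a n * b (n + 1) - a (n + 1) * b n = C"
    and wronskian_ca: "\<And>n. n \<ge> 1 \<Longrightarrow> a (n + 1) * c n - a n * c (n + 1) = B"
    and cramer: "\<And>n. A * a n + B * b n + C * c n = 0"
    and signs: "(B \<ge> 0 \<and> C \<ge> 0) \<or> C > 0 \<or> (B > 0 \<and> C < 0 \<and> A * C \<le> B\<^sup>2)"
    and gap_1: "gap 1 \<ge> 0"
    and combination_1: "C * z 1 + B * z 0 \<ge> 0"
    and "n \<ge> 1"
  shows "gap n \<ge> 0"
proof -
  have "gap n \<ge> 0 \<and> C * z n + B * z (n - 1) \<ge> 0"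
    using \<open>n \<ge> 1\<close>
  proof (induction n rule: dec_induct)
    case base
    then show ?case
      using gap_1 combination_1 by simp
  next
    case (step n)
    then have combination: "C * z (n + 1) + B * z n \<ge> 0"
      using z_pos a_pos c_pos cramer signs by (intro wronskian_combination_step) auto
    have "gap (n + 1) \<ge> 0"
    proof (rule gap_step)
      show "(a n * b (n + 1) - a (n + 1) * b n) * z (n + 1)
          + (a (n + 1) * c n - a n * c (n + 1)) * z n \<ge> 0"
        using combination wronskian_ab[OF \<open>n \<ge> 1\<close>] wronskian_ca[OF \<open>n \<ge> 1\<close>] by simp
    qed (use step a_pos c_pos z_pos[of n] in auto)
    with combination show ?case
      by simp
  qed
  then show ?thesis ..
qed

end

theorem theorem3p10:
  fixes z :: "nat \<Rightarrow> real"
    and \<alpha>\<^sub>1 \<alpha>\<^sub>0 \<beta>\<^sub>1 \<beta>\<^sub>0 \<gamma>\<^sub>1 \<gamma>\<^sub>0 A B C :: real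
  assumes zpos: "\<And>n. z n > 0"
    and rec: "\<And>n. n \<ge> 1 \<Longrightarrow>
      (\<alpha>\<^sub>1 * real n + \<alpha>\<^sub>0) * z (n + 1) =
        (\<beta>\<^sub>1 * real n + \<beta>\<^sub>0) * z n - (\<gamma>\<^sub>1 * real n + \<gamma>\<^sub>0) * z (n - 1)"
    and apos: "\<And>n. n \<ge> 1 \<Longrightarrow> \<alpha>\<^sub>1 * real n + \<alpha>\<^sub>0 > 0"
    and bpos: "\<And>n. n \<ge> 1 \<Longrightarrow> \<beta>\<^sub>1 * real n + \<beta>\<^sub>0 > 0"
    and cpos: "\<And>n. n \<ge> 1 \<Longrightarrow> \<gamma>\<^sub>1 * real n + \<gamma>\<^sub>0 > 0"
    and A_def: "A = \<beta>\<^sub>0 * \<gamma>\<^sub>1 - \<beta>\<^sub>1 * \<gamma>\<^sub>0"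
    and B_def: "B = \<gamma>\<^sub>0 * \<alpha>\<^sub>1 - \<gamma>\<^sub>1 * \<alpha>\<^sub>0"
    and C_def: "C = \<alpha>\<^sub>0 * \<beta>\<^sub>1 - \<alpha>\<^sub>1 * \<beta>\<^sub>0"
    and init: "z 0 * z 2 \<ge> (z 1)\<^sup>2"
    and cases: "(B \<ge> 0 \<and> C \<ge> 0)
      \<or> (B < 0 \<and> C > 0 \<and> A * C \<ge> B\<^sup>2 \<and> z 0 * B + z 1 * C \<ge> 0)
      \<or> (B > 0 \<and> C < 0 \<and> A * C \<le> B\<^sup>2 \<and> z 0 * B + z 1 * C \<ge> 0)"
  shows "log_convex z"
proof -
  define a where "a n = \<alpha>\<^sub>1 * real n + \<alpha>\<^sub>0" for n
  define b where "b n = \<beta>\<^sub>1 * real n + \<beta>\<^sub>0" for n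
  define c where "c n = \<gamma>\<^sub>1 * real n + \<gamma>\<^sub>0" for n
  interpret three_term_recurrence a b c z
    using rec by unfold_locales (simp add: a_def b_def c_def)
  \<comment> \<open>\<open>bpos\<close> is implied by the recurrence and positivity, and in case (ii) only \<open>C > 0\<close>
    is needed.\<close>
  have "gap n \<ge> 0" if "n \<ge> 1" for n
  proof (rule gap_nonneg_of_constant_wronskians[where A = A and B = B and C = C])
    show "a n * b (n + 1) - a (n + 1) * b n = C" for n
      unfolding a_def b_def C_def by (rule linear_wronskian)
    show "a (n + 1) * c n - a n * c (n + 1) = B" for n
      unfolding a_def c_def B_def using linear_wronskian[of \<gamma>\<^sub>1 n \<gamma>\<^sub>0 \<alpha>\<^sub>1 \<alpha>\<^sub>0]
      by (simp only: mult.commute)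
    show "A * a n + B * b n + C * c n = 0" for n
      unfolding a_def b_def c_def A_def B_def C_def by (rule linear_cramer)
    show "gap 1 \<ge> 0"
      using init by (simp add: gap_def numeral_2_eq_2)
    show "C * z 1 + B * z 0 \<ge> 0"
      using cases zpos[of 0] zpos[of 1] by (auto simp: algebra_simps)
    show "(B \<ge> 0 \<and> C \<ge> 0) \<or> C > 0 \<or> (B > 0 \<and> C < 0 \<and> A * C \<le> B\<^sup>2)"
      using cases by blast
    show "a n > 0" if "n \<ge> 1" for n
      using apos[OF that] unfolding a_def .
    show "c n > 0" if "n \<ge> 1" for n
      using cpos[OF that] unfolding c_def .
  qed (use zpos that in simp_all)
  then show ?thesis
    using zpos by (auto simp: log_convex_def gap_def less_imp_le)
qed

end
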